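(* Let $0\le\alpha<1$ and $K_\alpha:=\operatorname{conv}\{\pm(1,\alpha),\pm(0,1)\}\subseteq\mathbb{R}^2$. Then $\mu_2(K_\alpha)=\frac12\max\{1+\alpha,2-\alpha\}$.
   Context: For a closed convex set $K\subseteq\mathbb{R}^2$ with non-empty interior, $\mu_2(K):=\inf\{t\ge0: tK+\mathbb{Z}^2=\mathbb{R}^2\}$ (the second covering minimum, or inhomogeneous minimum). *)

theory Defs
  imports "HOL-Analysis.Analysis"
begin

definition int_lattice2 :: "(real \<times> real) set" where
  "int_lattice2 = {(of_int a, of_int b) | a b :: int. True}"

definition covering_minimum2 :: "(real \<times> real) set \<Rightarrow> real" where
  "covering_minimum2 K =
     Inf {t. t \<ge> 0 \<and> (\<lambda>(y, z). t *\<^sub>R y + z) ` (K \<times> int_lattice2) = UNIV}"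

definition K_alpha :: "real \<Rightarrow> (real \<times> real) set" where
  "K_alpha \<alpha> = convex hull {(1, \<alpha>), (-1, -\<alpha>), (0, 1), (0, -1)}"

end

theory Submission
  imports Defs
begin

text \<open>Under the shear \<open>(u, y) \<mapsto> (u, y - \<alpha> u)\<close>, \<open>K_alpha \<alpha>\<close> is the unit ball of
  \<open>|u| + |y - \<alpha> u|\<close>, so \<open>t K + \<int>\<^sup>2\<close> covers the plane iff every point lies within distance \<open>t\<close>
  of the lattice in this norm. For the upper bound, put \<open>x = m + s\<close> with \<open>0 \<le> s < 1\<close> and
  compare the lattice columns \<open>m\<close> and \<open>m + 1\<close>: suitable integers \<open>b1, b2\<close> make the sum of the two
  distances at most \<open>1 + max \<alpha> (1 - \<alpha>)\<close>. The lower bound comes from the points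
  \<open>(1/2, 1/2)\<close> and \<open>(1/2, 0)\<close>, whose distances to the lattice are \<open>1 - \<alpha>/2\<close> and \<open>(1 + \<alpha>)/2\<close>.\<close>

definition shear_norm :: "real \<Rightarrow> real \<times> real \<Rightarrow> real" where
  "shear_norm \<alpha> p = \<bar>fst p\<bar> + \<bar>snd p - \<alpha> * fst p\<bar>"

lemma shear_norm_Pair [simp]: "shear_norm \<alpha> (u, y) = \<bar>u\<bar> + \<bar>y - \<alpha> * u\<bar>"
  by (simp add: shear_norm_def)

lemma shear_norm_scaleR: "shear_norm \<alpha> (c *\<^sub>R p) = \<bar>c\<bar> * shear_norm \<alpha> p"
proof -
  have "c * snd p - \<alpha> * (c * fst p) = c * (snd p - \<alpha> * fst p)"
    by (simp add: algebra_simps)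
  then show ?thesis by (simp add: shear_norm_def abs_mult distrib_left)
qed

lemma shear_norm_triangle: "shear_norm \<alpha> (p + q) \<le> shear_norm \<alpha> p + shear_norm \<alpha> q"
proof -
  have "snd p + snd q - \<alpha> * (fst p + fst q) = (snd p - \<alpha> * fst p) + (snd q - \<alpha> * fst q)"
    by (simp add: algebra_simps)
  then show ?thesis
    unfolding shear_norm_def fst_add snd_add
    by (smt (verit) abs_triangle_ineq)
qed

lemma shear_norm_nonneg: "0 \<le> shear_norm \<alpha> p"
  by (simp add: shear_norm_def)

lemma shear_norm_eq_0_iff: "shear_norm \<alpha> p = 0 \<longleftrightarrow> p = 0"
  by (cases p) (auto simp: zero_prod_def add_nonneg_eq_0_iff)

lemma convex_shear_norm_sublevel: "convex {p. shear_norm \<alpha> p \<le> r}"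
proof (rule convexI)
  fix p q and a b :: real
  assume "p \<in> {p. shear_norm \<alpha> p \<le> r}" "q \<in> {p. shear_norm \<alpha> p \<le> r}"
    and ab: "0 \<le> a" "0 \<le> b" "a + b = 1"
  then have "shear_norm \<alpha> (a *\<^sub>R p + b *\<^sub>R q) \<le> a * r + b * r"
    using shear_norm_triangle[of \<alpha> "a *\<^sub>R p" "b *\<^sub>R q"]
    by (simp add: shear_norm_scaleR add_mono mult_left_mono order_trans)
  with ab show "a *\<^sub>R p + b *\<^sub>R q \<in> {p. shear_norm \<alpha> p \<le> r}"
    by (simp add: distrib_right[symmetric])
qed

lemma K_alpha_eq: "K_alpha \<alpha> = {p. shear_norm \<alpha> p \<le> 1}"
proof
  show "K_alpha \<alpha> \<subseteq> {p. shear_norm \<alpha> p \<le> 1}"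
    unfolding K_alpha_def
    by (intro hull_minimal convex_shear_norm_sublevel) auto
next
  show "{p. shear_norm \<alpha> p \<le> 1} \<subseteq> K_alpha \<alpha>"
  proof safe
    fix u y assume "shear_norm \<alpha> (u, y) \<le> 1"
    define k where "k = y - \<alpha> * u"
    define r where "r = 1 - \<bar>u\<bar> - \<bar>k\<bar>"
    have "r \<ge> 0"
      using \<open>shear_norm \<alpha> (u, y) \<le> 1\<close> by (simp add: r_def k_def)
    define S :: "(real \<times> real) set" where "S = {(1, \<alpha>), (-1, -\<alpha>), (0, 1), (0, -1)}"
    \<comment> \<open>The positive and negative parts of \<open>u\<close> and \<open>k\<close>, with the slack \<open>r\<close> split evenly between \<open>\<plusminus>(0,1)\<close>.\<close>
    define c where "c = (\<lambda>p :: real \<times> real.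
      if p = (1, \<alpha>) then max u 0 else if p = (-1, -\<alpha>) then max (-u) 0
      else if p = (0, 1) then max k 0 + r/2 else max (-k) 0 + r/2)"
    have "(\<forall>x\<in>S. 0 \<le> c x) \<and> sum c S = 1 \<and> (\<Sum>x\<in>S. c x *\<^sub>R x) = (u, y)"
      using \<open>r \<ge> 0\<close> by (auto simp: S_def c_def r_def k_def max_def)
    then show "(u, y) \<in> K_alpha \<alpha>"
      unfolding K_alpha_def by (subst convex_hull_finite) (auto simp: S_def)
  qed
qed

lemma scaled_K_alpha_plus_lattice_eq_UNIV_iff:
  assumes "0 \<le> t"
  shows "(\<lambda>(y, z). t *\<^sub>R y + z) ` (K_alpha \<alpha> \<times> int_lattice2) = UNIV \<longleftrightarrow>
    (\<forall>x y. \<exists>a b :: int. shear_norm \<alpha> (x - of_int a, y - of_int b) \<le> t)"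
    (is "?covers \<longleftrightarrow> ?close")
proof
  assume ?covers
  show ?close
  proof (intro allI)
    fix x y
    have "(x, y) \<in> (\<lambda>(y, z). t *\<^sub>R y + z) ` (K_alpha \<alpha> \<times> int_lattice2)"
      using \<open>?covers\<close> by simp
    then obtain k z where "k \<in> K_alpha \<alpha>" "z \<in> int_lattice2" "(x, y) = t *\<^sub>R k + z"
      by auto
    moreover obtain a b :: int where "z = (of_int a, of_int b)"
      using \<open>z \<in> int_lattice2\<close> by (auto simp: int_lattice2_def)
    ultimately have "(x - of_int a, y - of_int b) = t *\<^sub>R k"
      by (auto simp: prod_eq_iff)
    then have "shear_norm \<alpha> (x - of_int a, y - of_int b) = t * shear_norm \<alpha> k"
      using assms by (simp only: shear_norm_scaleR abs_of_nonneg)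
    also have "\<dots> \<le> t"
      using \<open>k \<in> K_alpha \<alpha>\<close> assms by (simp add: K_alpha_eq mult_left_le)
    finally show "\<exists>a b :: int. shear_norm \<alpha> (x - of_int a, y - of_int b) \<le> t" by blast
  qed
next
  assume ?close
  have "p \<in> (\<lambda>(y, z). t *\<^sub>R y + z) ` (K_alpha \<alpha> \<times> int_lattice2)" for p
  proof -
    obtain x y where p: "p = (x, y)" by (cases p)
    obtain a b :: int where "shear_norm \<alpha> (x - of_int a, y - of_int b) \<le> t"
      using \<open>?close\<close> by blast
    moreover define z :: "real \<times> real" where "z = (of_int a, of_int b)"
    ultimately have close: "shear_norm \<alpha> (p - z) \<le> t" by (simp add: p)
    define k where "k = (1 / t) *\<^sub>R (p - z)"
    have "p = t *\<^sub>R k + z"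
    proof (cases "t = 0")
      case True
      then have "shear_norm \<alpha> (p - z) = 0"
        using close by (simp add: order_antisym shear_norm_nonneg)
      then show ?thesis using True by (simp add: shear_norm_eq_0_iff)
    qed (simp add: k_def)
    moreover have "k \<in> K_alpha \<alpha>"
      using close assms by (auto simp: K_alpha_eq k_def shear_norm_scaleR divide_le_eq_1)
    moreover have "z \<in> int_lattice2" by (auto simp: z_def int_lattice2_def)
    ultimately show ?thesis by (auto intro: image_eqI[of _ _ "(k, z)"])
  qed
  then show ?covers by blast
qed

lemma exists_int_pair_close:
  fixes \<alpha> w :: real
  assumes "0 \<le> \<alpha>" "\<alpha> \<le> 1"
  shows "\<exists>b1 b2 :: int. \<bar>w - of_int b1\<bar> + \<bar>w + \<alpha> - of_int b2\<bar> \<le> max \<alpha> (1 - \<alpha>)"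
proof -
  define n where "n = \<lfloor>w\<rfloor>"
  have n: "of_int n \<le> w" "w < of_int n + 1"
    unfolding n_def by linarith+
  show ?thesis
  proof (cases "w + \<alpha> \<le> of_int n + 1")
    case True
    then show ?thesis
      using n assms by (intro exI[of _ n] exI[of _ "n + 1"]) auto
  next
    case False
    then show ?thesis
      using n assms by (intro exI[of _ "n + 1"] exI[of _ "n + 1"]) auto
  qed
qed

lemma exists_lattice_point_shear_norm_le:
  fixes \<alpha> x y :: real
  assumes "0 \<le> \<alpha>" "\<alpha> \<le> 1"
  shows "\<exists>a b :: int. shear_norm \<alpha> (x - of_int a, y - of_int b) \<le> (1/2) * max (1 + \<alpha>) (2 - \<alpha>)"
proof -
  define m where "m = \<lfloor>x\<rfloor>"
  define s where "s = x - of_int m"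
  have s: "0 \<le> s" "s < 1"
    unfolding s_def m_def by linarith+
  obtain b1 b2 :: int
    where close: "\<bar>y - \<alpha> * s - of_int b1\<bar> + \<bar>y - \<alpha> * s + \<alpha> - of_int b2\<bar> \<le> max \<alpha> (1 - \<alpha>)"
    using exists_int_pair_close[OF assms] by blast
  have left: "shear_norm \<alpha> (x - of_int m, y - of_int b1) = s + \<bar>y - \<alpha> * s - of_int b1\<bar>"
    using s by (simp add: s_def algebra_simps)
  have right: "shear_norm \<alpha> (x - of_int (m + 1), y - of_int b2) = (1 - s) + \<bar>y - \<alpha> * s + \<alpha> - of_int b2\<bar>"
    using s by (simp add: s_def algebra_simps)
  have max_eq: "max (1 + \<alpha>) (2 - \<alpha>) = 1 + max \<alpha> (1 - \<alpha>)"
    by (simp add: max_def)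
  have "shear_norm \<alpha> (x - of_int m, y - of_int b1) \<le> (1/2) * max (1 + \<alpha>) (2 - \<alpha>) \<or>
      shear_norm \<alpha> (x - of_int (m + 1), y - of_int b2) \<le> (1/2) * max (1 + \<alpha>) (2 - \<alpha>)"
    unfolding left right max_eq using close by argo
  then show ?thesis by blast
qed

lemma abs_half_minus_int_ge:
  fixes a :: int
  assumes "a \<noteq> 0" "a \<noteq> 1"
  shows "3/2 \<le> \<bar>1/2 - real_of_int a\<bar>"
proof -
  have "a \<le> -1 \<or> a \<ge> 2" using assms by linarith
  then show ?thesis by auto
qed

lemma shear_norm_half_half_ge:
  fixes a b :: int
  assumes "0 \<le> \<alpha>" "\<alpha> \<le> 1"
  shows "1 - \<alpha>/2 \<le> shear_norm \<alpha> (1/2 - of_int a, 1/2 - of_int b)"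
proof (cases "a = 0 \<or> a = 1")
  case True
  then show ?thesis using assms by (cases "b \<le> 0") auto
next
  case False
  then show ?thesis using abs_half_minus_int_ge[of a] assms by auto
qed

lemma shear_norm_half_zero_ge:
  fixes a b :: int
  assumes "0 \<le> \<alpha>" "\<alpha> \<le> 1"
  shows "1/2 + \<alpha>/2 \<le> shear_norm \<alpha> (1/2 - of_int a, - of_int b)"
proof (cases "a = 0 \<or> a = 1")
  case True
  then show ?thesis using assms by (cases "b \<le> -1 \<or> b \<ge> 1") auto
next
  case False
  then show ?thesis using abs_half_minus_int_ge[of a] assms by auto
qed

theorem lemma16:
  fixes \<alpha> :: real
  assumes "0 \<le> \<alpha>" and "\<alpha> < 1"
  shows "covering_minimum2 (K_alpha \<alpha>) = (1/2) * max (1 + \<alpha>) (2 - \<alpha>)"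
proof -
  define \<mu> where "\<mu> = (1/2) * max (1 + \<alpha>) (2 - \<alpha>)"
  let ?T = "{t. t \<ge> 0 \<and> (\<lambda>(y, z). t *\<^sub>R y + z) ` (K_alpha \<alpha> \<times> int_lattice2) = UNIV}"
  have \<alpha>: "0 \<le> \<alpha>" "\<alpha> \<le> 1" using assms by simp_all
  have "\<mu> \<ge> 0" using assms by (simp add: \<mu>_def max_def)
  then have "\<mu> \<in> ?T"
    using exists_lattice_point_shear_norm_le[OF \<alpha>]
    by (simp add: scaled_K_alpha_plus_lattice_eq_UNIV_iff \<mu>_def)
  moreover have "\<mu> \<le> t" if "t \<in> ?T" for t
  proof -
    have close: "\<forall>x y. \<exists>a b :: int. shear_norm \<alpha> (x - of_int a, y - of_int b) \<le> t"
      using that scaled_K_alpha_plus_lattice_eq_UNIV_iff by blast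
    obtain a b :: int where "shear_norm \<alpha> (1/2 - of_int a, 1/2 - of_int b) \<le> t"
      using close by blast
    with shear_norm_half_half_ge[OF \<alpha>] have "1 - \<alpha>/2 \<le> t" by (rule order_trans)
    obtain a' b' :: int where "shear_norm \<alpha> (1/2 - of_int a', - of_int b') \<le> t"
      using close[rule_format, of "1/2" 0] by auto
    with shear_norm_half_zero_ge[OF \<alpha>] have "1/2 + \<alpha>/2 \<le> t" by (rule order_trans)
    with \<open>1 - \<alpha>/2 \<le> t\<close> show ?thesis by (simp add: \<mu>_def max_def)
  qed
  ultimately show ?thesis
    unfolding covering_minimum2_def \<mu>_def[symmetric] by (rule cInf_eq_minimum)
qed

end
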